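(* Let $(\mathbf{X},\mathbf{p})$ be a $\{1,k\}$-payment equilibrium. If agent $i\in N_H$ is pEF1 towards every other agent, then $|X_i\cap L|\le\min_{j\in N_L}|X_j|$.
   Context: Fix $k>1$. Agents $N$, chores $M$, additive costs $c_i(e)\in\{1,k\}$. An allocation $\mathbf{X}$ partitions $M$ into bundles $X_i$. A payment vector assigns $p(e)>0$, $p(X)=\sum_{e\in X}p(e)$; $\alpha_{i,e}=c_i(e)/p(e)$, $\alpha_i=\min_e\alpha_{i,e}$, $\mathsf{MPB}_i=\{e:\alpha_{i,e}=\alpha_i\}$; $(\mathbf{X},\mathbf{p})$ is a $\{1,k\}$-payment equilibrium if $X_i\subseteq\mathsf{MPB}_i$ for all $i$ and $p(e)\in\{1,k\}$ for all $e$. $L=\{e:p(e)=1\}$, $H=\{e:p(e)=k\}$, $N_L=\{i:X_i\subseteq L\}$, $N_H=\{i:|X_i\cap H|\ge1\}$. Agent $i$ is pEF1 towards $j$ if $X_i=\emptyset$ or there is $e\in X_i$ with $p(X_i\setminus\{e\})\le p(X_j)$. *)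

theory Defs
  imports Complex_Main
begin

definition is_allocation :: "'a set \<Rightarrow> 'c set \<Rightarrow> ('a \<Rightarrow> 'c set) \<Rightarrow> bool" where
  "is_allocation N M X \<longleftrightarrow>
     (\<forall>i\<in>N. X i \<subseteq> M) \<and>
     (\<forall>i\<in>N. \<forall>j\<in>N. i \<noteq> j \<longrightarrow> X i \<inter> X j = {}) \<and>
     (\<Union>i\<in>N. X i) = M"

definition pay :: "('c \<Rightarrow> real) \<Rightarrow> 'c set \<Rightarrow> real" where
  "pay p S = (\<Sum>e\<in>S. p e)"

definition alpha :: "('a \<Rightarrow> 'c \<Rightarrow> real) \<Rightarrow> ('c \<Rightarrow> real) \<Rightarrow> 'a \<Rightarrow> 'c \<Rightarrow> real" where
  "alpha c p i e = c i e / p e"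

definition MPB :: "'c set \<Rightarrow> ('a \<Rightarrow> 'c \<Rightarrow> real) \<Rightarrow> ('c \<Rightarrow> real) \<Rightarrow> 'a \<Rightarrow> 'c set" where
  "MPB M c p i = {e \<in> M. \<forall>e'\<in>M. alpha c p i e \<le> alpha c p i e'}"

definition one_k_payment_equilibrium ::
  "real \<Rightarrow> 'a set \<Rightarrow> 'c set \<Rightarrow> ('a \<Rightarrow> 'c \<Rightarrow> real) \<Rightarrow> ('a \<Rightarrow> 'c set) \<Rightarrow> ('c \<Rightarrow> real) \<Rightarrow> bool" where
  "one_k_payment_equilibrium k N M c X p \<longleftrightarrow>
     is_allocation N M X \<and>
     (\<forall>e\<in>M. p e \<in> {1, k}) \<and>
     (\<forall>i\<in>N. X i \<subseteq> MPB M c p i)"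

definition Lset :: "'c set \<Rightarrow> ('c \<Rightarrow> real) \<Rightarrow> 'c set" where
  "Lset M p = {e \<in> M. p e = 1}"

definition Hset :: "real \<Rightarrow> 'c set \<Rightarrow> ('c \<Rightarrow> real) \<Rightarrow> 'c set" where
  "Hset k M p = {e \<in> M. p e = k}"

definition N_L :: "'a set \<Rightarrow> 'c set \<Rightarrow> ('a \<Rightarrow> 'c set) \<Rightarrow> ('c \<Rightarrow> real) \<Rightarrow> 'a set" where
  "N_L N M X p = {i \<in> N. X i \<subseteq> Lset M p}"

definition N_H :: "real \<Rightarrow> 'a set \<Rightarrow> 'c set \<Rightarrow> ('a \<Rightarrow> 'c set) \<Rightarrow> ('c \<Rightarrow> real) \<Rightarrow> 'a set" where
  "N_H k N M X p = {i \<in> N. card (X i \<inter> Hset k M p) \<ge> 1}"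

definition pEF1 :: "('a \<Rightarrow> 'c set) \<Rightarrow> ('c \<Rightarrow> real) \<Rightarrow> 'a \<Rightarrow> 'a \<Rightarrow> bool" where
  "pEF1 X p i j \<longleftrightarrow> X i = {} \<or> (\<exists>e\<in>X i. pay p (X i - {e}) \<le> pay p (X j))"

end

theory Submission
  imports Defs
begin

text \<open>
  Agent \<open>i\<close> owns a chore \<open>h\<close> of price \<open>k > 1\<close>. Whichever chore \<open>e\<close> the pEF1 condition removes
  from \<open>X i\<close>, what remains still pays at least the number of unit-price chores of \<open>i\<close>: if \<open>e\<close>
  has price 1, then \<open>h\<close> survives and compensates for it. On the other side, the bundle of an
  agent \<open>j \<in> N_L\<close> pays exactly \<open>|X j|\<close>. Only the prices enter the argument.
\<close>

lemma pay_eq_card: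
  assumes "\<And>x. x \<in> A \<Longrightarrow> p x = 1"
  shows "pay p A = card A"
  using assms by (simp add: pay_def)

lemma card_unit_price_le_pay_remove:
  assumes "finite S" and nonneg: "\<And>x. x \<in> S \<Longrightarrow> p x \<ge> 0"
    and h: "h \<in> S" "p h > 1"
  shows "card {x \<in> S. p x = 1} \<le> pay p (S - {e})"
proof -
  define T where "T = {x \<in> S. p x = 1}"
  have "finite T" and "h \<notin> T"
    using \<open>finite S\<close> h by (auto simp: T_def)
  have T_pay: "pay p T = card T"
    by (rule pay_eq_card) (simp add: T_def)
  show ?thesis
  proof (cases "e \<in> T")
    case False
    then have "pay p T \<le> pay p (S - {e})"
      unfolding pay_def using \<open>finite S\<close> nonneg by (intro sum_mono2) (auto simp: T_def)
    then show ?thesis using T_pay by (simp add: T_def)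
  next
    case True
    have "p e = 1"
      using True by (simp add: T_def)
    have "pay p T = p e + pay p (T - {e})"
      unfolding pay_def by (rule sum.remove[OF \<open>finite T\<close> True])
    also have "\<dots> = 1 + pay p (T - {e})"
      using \<open>p e = 1\<close> by simp
    also have "\<dots> \<le> p h + pay p (T - {e})"
      using h by simp
    also have "\<dots> = pay p (insert h (T - {e}))"
      using \<open>finite T\<close> \<open>h \<notin> T\<close> by (simp add: pay_def)
    also have "\<dots> \<le> pay p (S - {e})"
      unfolding pay_def using \<open>finite S\<close> nonneg h \<open>h \<notin> T\<close> True
      by (intro sum_mono2) (auto simp: T_def)
    finally show ?thesis using T_pay by (simp add: T_def)
  qed
qed

theorem lemma6:
  fixes k :: real and N :: "'a set" and M :: "'c set"
    and c :: "'a \<Rightarrow> 'c \<Rightarrow> real" and X :: "'a \<Rightarrow> 'c set" and p :: "'c \<Rightarrow> real"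
  assumes "k > 1"
    and "finite N" and "finite M"
    and "\<forall>i\<in>N. \<forall>e\<in>M. c i e \<in> {1, k}"
    and "one_k_payment_equilibrium k N M c X p"
    and "i \<in> N_H k N M X p"
    and "\<forall>j\<in>N. j \<noteq> i \<longrightarrow> pEF1 X p i j"
  shows "\<forall>j\<in>N_L N M X p. card (X i \<inter> Lset M p) \<le> card (X j)"
proof
  fix j assume "j \<in> N_L N M X p"
  then have "j \<in> N" and Xj_low: "X j \<subseteq> Lset M p"
    by (auto simp: N_L_def)
  have "i \<in> N" and "X i \<inter> Hset k M p \<noteq> {}"
    using assms(6) by (auto simp: N_H_def)
  then obtain h where h: "h \<in> X i" "p h = k"
    by (auto simp: Hset_def)
  have Xi_M: "X i \<subseteq> M" and prices: "\<forall>e\<in>M. p e \<in> {1, k}"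
    using assms(5) \<open>i \<in> N\<close> by (auto simp: one_k_payment_equilibrium_def is_allocation_def)
  have "i \<noteq> j"
    using Xj_low h \<open>k > 1\<close> by (auto simp: Lset_def)
  then obtain e where "pay p (X i - {e}) \<le> pay p (X j)"
    using assms(7) \<open>j \<in> N\<close> h(1) by (auto simp: pEF1_def)
  moreover have "card (X i \<inter> Lset M p) \<le> pay p (X i - {e})"
  proof -
    have "X i \<inter> Lset M p = {x \<in> X i. p x = 1}"
      using Xi_M by (auto simp: Lset_def)
    moreover have "\<And>x. x \<in> X i \<Longrightarrow> p x \<ge> 0"
      using Xi_M prices \<open>k > 1\<close> by fastforce
    ultimately show ?thesis
      using card_unit_price_le_pay_remove[of "X i" p h e] Xi_M \<open>finite M\<close> h \<open>k > 1\<close>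
      by (auto intro: finite_subset)
  qed
  moreover have "pay p (X j) = card (X j)"
    using Xj_low by (intro pay_eq_card) (auto simp: Lset_def)
  ultimately show "card (X i \<inter> Lset M p) \<le> card (X j)"
    by simp
qed

end
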